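(* Assume $\operatorname{char}\mathbb F\ne 2,3$. Let $A$ be a primitive axial algebra of Jordan type $\tfrac12$ which is a Jordan algebra of Clifford type, and let $\mathcal A$ be a closed set of $\tfrac12$-axes generating $A$ such that $A$ is a $3$-transposition algebra with respect to $\mathcal A$ and $D=\{\tau(a)\mid a\in\mathcal A,\ \tau(a)\ne\mathrm{id}\}$ is a conjugacy class of $G=\langle D\rangle$. Then $D$ is a set of $3$-transpositions of symplectic type in $G$.
   Context: For a commutative $\mathbb F$-algebra $A$, $a\in A$, $\lambda\in\mathbb F$, put $A_\lambda(a)=\{x: xa=\lambda x\}$. A $\tfrac12$-axis is an idempotent $a$ with $A=A_1(a)\oplus A_0(a)\oplus A_{1/2}(a)$, $A_1(a)=\mathbb F a$, and with $A_+(a)=A_1(a)\oplus A_0(a)$, $A_-(a)=A_{1/2}(a)$ satisfying $A_+A_+\subseteq A_+$, $A_+A_-\subseteq A_-$, $A_-A_-\subseteq A_+$, $A_0(a)A_0(a)\subseteq A_0(a)$. A primitive axial algebra of Jordan type $\tfrac12$ is a commutative algebra generated by $\tfrac12$-axes. The Miyamoto involution $\tau(a)$ acts as $1$ on $A_+(a)$ and $-1$ on $A_-(a)$. A set $\mathcal A$ of axes is closed if $a^{\tau(b)}\in\mathcal A$ for all $a,b\in\mathcal A$. $A$ is a $3$-transposition algebra with respect to a closed generating set $\mathcal A$ if every product of two elements of $D=\{\tau(a)\mid a\in\mathcal A,\tau(a)\ne\mathrm{id}\}$ has order $1$, $2$ or $3$. A Jordan algebra of Clifford type is an algebra isomorphic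 to $J(V,B)=\mathbb F\mathbf e\oplus V$ ($B$ a symmetric bilinear form on $V$) with product $(\alpha\mathbf e+u)(\beta\mathbf e+v)=(\alpha\beta+B(u,v))\mathbf e+\alpha v+\beta u$. A normal generating set $D$ of $3$-transpositions is of symplectic type if for all $d,e,f\in D$ with $\langle e,f\rangle\cong S_3$, $d$ commutes with at least one of $e,f,efe$. *)

theory Defs
  imports Main "HOL.Vector_Spaces" "HOL-Algebra.Bij" "HOL-Algebra.Generated_Groups" "HOL-Algebra.Sym_Groups"
begin

definition comm_algebra :: "('f::field \<Rightarrow> 'v::ab_group_add \<Rightarrow> 'v) \<Rightarrow> ('v \<Rightarrow> 'v \<Rightarrow> 'v) \<Rightarrow> bool" where
  "comm_algebra sc m \<longleftrightarrow> Vector_Spaces.vector_space sc \<and>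
     (\<forall>x y. m x y = m y x) \<and>
     (\<forall>x y z. m (x + y) z = m x z + m y z) \<and>
     (\<forall>c x y. m (sc c x) y = sc c (m x y))"

definition eig :: "('f::field \<Rightarrow> 'v::ab_group_add \<Rightarrow> 'v) \<Rightarrow> ('v \<Rightarrow> 'v \<Rightarrow> 'v) \<Rightarrow> 'v \<Rightarrow> 'f \<Rightarrow> 'v set" where
  "eig sc m a l = {x. m x a = sc l x}"

definition Aplus :: "('f::field \<Rightarrow> 'v::ab_group_add \<Rightarrow> 'v) \<Rightarrow> ('v \<Rightarrow> 'v \<Rightarrow> 'v) \<Rightarrow> 'v \<Rightarrow> 'v set" where
  "Aplus sc m a = {p + q | p q. p \<in> eig sc m a 1 \<and> q \<in> eig sc m a 0}"

definition Aminus :: "('f::field \<Rightarrow> 'v::ab_group_add \<Rightarrow> 'v) \<Rightarrow> ('v \<Rightarrow> 'v \<Rightarrow> 'v) \<Rightarrow> 'v \<Rightarrow> 'v set" where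
  "Aminus sc m a = eig sc m a (1/2)"

definition half_axis :: "('f::field \<Rightarrow> 'v::ab_group_add \<Rightarrow> 'v) \<Rightarrow> ('v \<Rightarrow> 'v \<Rightarrow> 'v) \<Rightarrow> 'v \<Rightarrow> bool" where
  "half_axis sc m a \<longleftrightarrow>
     m a a = a \<and>
     (\<forall>x. \<exists>x1 x0 xh. x1 \<in> eig sc m a 1 \<and> x0 \<in> eig sc m a 0 \<and> xh \<in> eig sc m a (1/2)
            \<and> x = x1 + x0 + xh) \<and>
     (\<forall>x1 x0 xh. x1 \<in> eig sc m a 1 \<and> x0 \<in> eig sc m a 0 \<and> xh \<in> eig sc m a (1/2)
            \<and> x1 + x0 + xh = 0 \<longrightarrow> x1 = 0 \<and> x0 = 0 \<and> xh = 0) \<and>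
     eig sc m a 1 = range (\<lambda>c. sc c a) \<and>
     (\<forall>x\<in>Aplus sc m a. \<forall>y\<in>Aplus sc m a. m x y \<in> Aplus sc m a) \<and>
     (\<forall>x\<in>Aplus sc m a. \<forall>y\<in>Aminus sc m a. m x y \<in> Aminus sc m a) \<and>
     (\<forall>x\<in>Aminus sc m a. \<forall>y\<in>Aminus sc m a. m x y \<in> Aplus sc m a) \<and>
     (\<forall>x\<in>eig sc m a 0. \<forall>y\<in>eig sc m a 0. m x y \<in> eig sc m a 0)"

definition tau :: "('f::field \<Rightarrow> 'v::ab_group_add \<Rightarrow> 'v) \<Rightarrow> ('v \<Rightarrow> 'v \<Rightarrow> 'v) \<Rightarrow> 'v \<Rightarrow> 'v \<Rightarrow> 'v" where
  "tau sc m a x = (THE y. \<exists>p q. p \<in> Aplus sc m a \<and> q \<in> Aminus sc m a \<and> x = p + q \<and> y = p - q)"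

definition alg_generates :: "('f::field \<Rightarrow> 'v::ab_group_add \<Rightarrow> 'v) \<Rightarrow> ('v \<Rightarrow> 'v \<Rightarrow> 'v) \<Rightarrow> 'v set \<Rightarrow> bool" where
  "alg_generates sc m X \<longleftrightarrow>
     (\<forall>S. module.subspace sc S \<and> (\<forall>x\<in>S. \<forall>y\<in>S. m x y \<in> S) \<and> X \<subseteq> S \<longrightarrow> S = UNIV)"

text \<open>Jordan algebra of Clifford type: isomorphic to J(V,B) = F e + V.  Transported
  along the isomorphism, this says: there is a nonzero e and a subspace V with
  A = F e (+) V and a symmetric bilinear form B on V such that the product is
  (a e + u)(b e + v) = (a b + B(u,v)) e + a v + b u.\<close>
definition clifford_type :: "('f::field \<Rightarrow> 'v::ab_group_add \<Rightarrow> 'v) \<Rightarrow> ('v \<Rightarrow> 'v \<Rightarrow> 'v) \<Rightarrow> bool" where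
  "clifford_type sc m \<longleftrightarrow> (\<exists>e V B.
     e \<noteq> 0 \<and> module.subspace sc V \<and>
     (\<forall>c. sc c e \<in> V \<longrightarrow> c = 0) \<and>
     (\<forall>x. \<exists>c v. v \<in> V \<and> x = sc c e + v) \<and>
     (\<forall>u\<in>V. \<forall>v\<in>V. B u v = B v u) \<and>
     (\<forall>u\<in>V. \<forall>v\<in>V. \<forall>w\<in>V. B (u + v) w = B u w + B v w) \<and>
     (\<forall>c. \<forall>u\<in>V. \<forall>v\<in>V. B (sc c u) v = c * B u v) \<and>
     (\<forall>\<alpha> \<beta>. \<forall>u\<in>V. \<forall>v\<in>V.
        m (sc \<alpha> e + u) (sc \<beta> e + v) = sc (\<alpha> * \<beta> + B u v) e + sc \<alpha> v + sc \<beta> u))"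

definition miyamoto_set :: "('f::field \<Rightarrow> 'v::ab_group_add \<Rightarrow> 'v) \<Rightarrow> ('v \<Rightarrow> 'v \<Rightarrow> 'v) \<Rightarrow> 'v set \<Rightarrow> ('v \<Rightarrow> 'v) set" where
  "miyamoto_set sc m X = {tau sc m a | a. a \<in> X \<and> tau sc m a \<noteq> id}"

definition conj_class :: "('a, 'b) monoid_scheme \<Rightarrow> 'a set \<Rightarrow> 'a set \<Rightarrow> bool" where
  "conj_class G H D \<longleftrightarrow> (\<exists>d\<in>D. D = {g \<otimes>\<^bsub>G\<^esub> d \<otimes>\<^bsub>G\<^esub> inv\<^bsub>G\<^esub> g | g. g \<in> H})"

definition symplectic_3transp :: "('a, 'b) monoid_scheme \<Rightarrow> 'a set \<Rightarrow> 'a set \<Rightarrow> bool" where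
  "symplectic_3transp G H D \<longleftrightarrow>
     D \<subseteq> H \<and> generate G D = H \<and>
     (\<forall>d\<in>D. d \<noteq> \<one>\<^bsub>G\<^esub> \<and> d \<otimes>\<^bsub>G\<^esub> d = \<one>\<^bsub>G\<^esub>) \<and>
     (\<forall>g\<in>H. \<forall>d\<in>D. g \<otimes>\<^bsub>G\<^esub> d \<otimes>\<^bsub>G\<^esub> inv\<^bsub>G\<^esub> g \<in> D) \<and>
     (\<forall>d\<in>D. \<forall>e\<in>D. (d \<otimes>\<^bsub>G\<^esub> e) [^]\<^bsub>G\<^esub> (2::nat) = \<one>\<^bsub>G\<^esub> \<or>
                    (d \<otimes>\<^bsub>G\<^esub> e) [^]\<^bsub>G\<^esub> (3::nat) = \<one>\<^bsub>G\<^esub>) \<and>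
     (\<forall>d\<in>D. \<forall>e\<in>D. \<forall>f\<in>D.
        (G\<lparr>carrier := generate G {e, f}\<rparr>) \<cong> sym_group 3 \<longrightarrow>
          d \<otimes>\<^bsub>G\<^esub> e = e \<otimes>\<^bsub>G\<^esub> d \<or> d \<otimes>\<^bsub>G\<^esub> f = f \<otimes>\<^bsub>G\<^esub> d \<or>
          d \<otimes>\<^bsub>G\<^esub> (e \<otimes>\<^bsub>G\<^esub> f \<otimes>\<^bsub>G\<^esub> e) = (e \<otimes>\<^bsub>G\<^esub> f \<otimes>\<^bsub>G\<^esub> e) \<otimes>\<^bsub>G\<^esub> d)"

end

theory Submission
  imports Defs
begin

text \<open>Write the algebra as \<open>F e \<oplus> V\<close> with the form \<open>B\<close>. A \<open>1/2\<close>-axis with nontrivial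
  Miyamoto involution is \<open>a\<^sub>P = (e + P)/2\<close> with \<open>B P P = 1\<close>, and \<open>\<tau>(a\<^sub>P)\<close> fixes \<open>e\<close> and
  acts on \<open>V\<close> as \<open>\<rho>\<^sub>P y = 2 B y P P - y\<close>. Hence \<open>\<tau>(a\<^sub>P) \<tau>(a\<^sub>Q) \<tau>(a\<^sub>P) = \<tau>(a\<^bsub>\<rho>\<^sub>P Q\<^esub>)\<close>,
  and since \<open>\<rho>\<^sub>P\<close> determines \<open>P\<close> up to sign, two noncommuting involutions \<open>\<tau>(a\<^sub>P)\<close>,
  \<open>\<tau>(a\<^sub>Q)\<close> whose product has order 3 satisfy \<open>\<rho>\<^sub>P Q = \<plusminus>\<rho>\<^sub>Q P\<close>, i.e. \<open>4 B(P,Q)\<^sup>2 = 1\<close>;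
  orthogonal or proportional \<open>P, Q\<close> give commuting involutions. If \<open>\<tau>(a\<^sub>W)\<close> commuted
  with none of \<open>\<tau>(a\<^sub>U)\<close>, \<open>\<tau>(a\<^sub>X)\<close> and their conjugate \<open>\<tau>(a\<^bsub>\<rho>\<^sub>U X\<^esub>)\<close>, then \<open>4 B(W,U)\<^sup>2\<close>,
  \<open>4 B(W,X)\<^sup>2\<close>, \<open>4 B(U,X)\<^sup>2\<close> and \<open>4 B(W,\<rho>\<^sub>U X)\<^sup>2 = 4 (2 B(U,X) B(W,U) - B(W,X))\<^sup>2\<close> would
  all be 1, which forces \<open>4 = 1\<close>, impossible in characteristic \<open>\<noteq> 3\<close>.\<close>

section \<open>Groups of bijections and 3-transpositions\<close>

lemma (in group) centralizer_subgroup: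
  assumes "S \<subseteq> carrier G"
  shows "subgroup {x \<in> carrier G. \<forall>s\<in>S. x \<otimes> s = s \<otimes> x} G"
proof (rule subgroupI)
  fix x assume x: "x \<in> {x \<in> carrier G. \<forall>s\<in>S. x \<otimes> s = s \<otimes> x}"
  have "inv x \<otimes> s = s \<otimes> inv x" if s: "s \<in> S" for s
  proof -
    have sG: "s \<in> carrier G" using s assms by blast
    have "inv x \<otimes> s = inv x \<otimes> (s \<otimes> x) \<otimes> inv x" using x sG by (simp add: m_assoc)
    also have "\<dots> = inv x \<otimes> (x \<otimes> s) \<otimes> inv x" using x s by simp
    also have "\<dots> = s \<otimes> inv x" using x sG by (simp flip: m_assoc)
    finally show ?thesis .
  qed
  then show "inv x \<in> {x \<in> carrier G. \<forall>s\<in>S. x \<otimes> s = s \<otimes> x}"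
    using x by auto
next
  fix x y assume x: "x \<in> {x \<in> carrier G. \<forall>s\<in>S. x \<otimes> s = s \<otimes> x}"
    and y: "y \<in> {x \<in> carrier G. \<forall>s\<in>S. x \<otimes> s = s \<otimes> x}"
  have "x \<otimes> y \<otimes> s = s \<otimes> (x \<otimes> y)" if s: "s \<in> S" for s
  proof -
    have sG: "s \<in> carrier G" using s assms by blast
    have "x \<otimes> y \<otimes> s = x \<otimes> (s \<otimes> y)" using x y s sG by (simp add: m_assoc)
    also have "\<dots> = s \<otimes> (x \<otimes> y)" using x y s sG by (simp flip: m_assoc)
    finally show ?thesis .
  qed
  then show "x \<otimes> y \<in> {x \<in> carrier G. \<forall>s\<in>S. x \<otimes> s = s \<otimes> x}"
    using x y by auto
qed (use assms in \<open>auto intro!: exI[of _ \<one>]\<close>)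

lemma (in group) generate_commute:
  assumes S: "S \<subseteq> carrier G" and comm: "\<And>s t. s \<in> S \<Longrightarrow> t \<in> S \<Longrightarrow> s \<otimes> t = t \<otimes> s"
    and x: "x \<in> generate G S" and y: "y \<in> generate G S"
  shows "x \<otimes> y = y \<otimes> x"
proof -
  have "generate G S \<subseteq> {x \<in> carrier G. \<forall>s\<in>S. x \<otimes> s = s \<otimes> x}"
    using S comm by (intro generate_subgroup_incl centralizer_subgroup) auto
  then have "S \<subseteq> {z \<in> carrier G. \<forall>s\<in>generate G S. z \<otimes> s = s \<otimes> z}"
    using S by auto
  then have "generate G S \<subseteq> {z \<in> carrier G. \<forall>s\<in>generate G S. z \<otimes> s = s \<otimes> z}"
    by (rule generate_subgroup_incl[OF _ centralizer_subgroup]) (use generate_in_carrier[OF S] in blast)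
  then show ?thesis using x y by auto
qed

lemma iso_sym_group_3_not_commute:
  assumes "G\<lparr>carrier := K\<rparr> \<cong> sym_group 3"
  shows "\<exists>x\<in>K. \<exists>y\<in>K. x \<otimes>\<^bsub>G\<^esub> y \<noteq> y \<otimes>\<^bsub>G\<^esub> x"
proof -
  obtain h where h: "h \<in> iso (G\<lparr>carrier := K\<rparr>) (sym_group 3)"
    using assms unfolding is_iso_def by auto
  let ?s = "Transposition.transpose (1::nat) 2" and ?t = "Transposition.transpose (2::nat) 3"
  have bij: "bij_betw h K (carrier (sym_group 3))"
    using h by (auto simp: iso_def)
  have "?s \<in> h ` K" "?t \<in> h ` K"
    using bij by (auto simp: bij_betw_def sym_group_carrier intro!: permutes_swap_id)
  then obtain x y where x: "x \<in> K" "h x = ?s" and y: "y \<in> K" "h y = ?t"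
    by (metis imageE)
  have hom: "h \<in> hom (G\<lparr>carrier := K\<rparr>) (sym_group 3)"
    using h by (auto simp: iso_def)
  have "h (x \<otimes>\<^bsub>G\<^esub> y) = ?s \<circ> ?t" "h (y \<otimes>\<^bsub>G\<^esub> x) = ?t \<circ> ?s"
    using hom x y by (auto simp: hom_def sym_group_mult)
  moreover have "?s \<circ> ?t \<noteq> ?t \<circ> ?s"
  proof
    assume "?s \<circ> ?t = ?t \<circ> ?s"
    then have "(?s \<circ> ?t) 1 = (?t \<circ> ?s) 1" by simp
    then show False by (simp add: Transposition.transpose_def)
  qed
  ultimately have "x \<otimes>\<^bsub>G\<^esub> y \<noteq> y \<otimes>\<^bsub>G\<^esub> x"
    by metis
  then show ?thesis
    using x y by blast
qed

lemma carrier_BijGroup_UNIV [simp]: "f \<in> carrier (BijGroup UNIV) \<longleftrightarrow> bij f"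
  by (simp add: BijGroup_def Bij_def)

lemma one_BijGroup_UNIV [simp]: "\<one>\<^bsub>BijGroup UNIV\<^esub> = id"
  by (simp add: BijGroup_def fun_eq_iff)

lemma mult_BijGroup_UNIV [simp]:
  "bij f \<Longrightarrow> bij g \<Longrightarrow> f \<otimes>\<^bsub>BijGroup UNIV\<^esub> g = f \<circ> g"
  by (simp add: BijGroup_def Bij_def compose_def fun_eq_iff)

lemma pow_BijGroup_UNIV [simp]:
  "bij f \<Longrightarrow> f [^]\<^bsub>BijGroup UNIV\<^esub> (n::nat) = f ^^ n"
proof (induction n)
  case (Suc n)
  then show ?case
    using monoid.nat_pow_closed[OF group.is_monoid[OF group_BijGroup], of f UNIV n]
    by (simp add: funpow_Suc_right bij_comp del: funpow.simps)
qed simp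

lemma (in group) conj_class_conj_closed:
  assumes H: "subgroup H G" and cc: "conj_class G H D" and D: "D \<subseteq> carrier G"
    and g: "g \<in> H" and d: "d \<in> D"
  shows "g \<otimes> d \<otimes> inv g \<in> D"
proof -
  obtain d0 where d0: "d0 \<in> D" and D_eq: "D = {h \<otimes> d0 \<otimes> inv h | h. h \<in> H}"
    using cc unfolding conj_class_def by blast
  obtain h where h: "h \<in> H" and dh: "d = h \<otimes> d0 \<otimes> inv h"
    using d D_eq by blast
  have carr: "g \<in> carrier G" "h \<in> carrier G" "d0 \<in> carrier G"
    using g h d0 D subgroup.mem_carrier[OF H] by auto
  have "g \<otimes> d \<otimes> inv g = (g \<otimes> h) \<otimes> d0 \<otimes> inv (g \<otimes> h)"
    using carr by (simp add: dh inv_mult_group m_assoc)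
  moreover have "g \<otimes> h \<in> H"
    using H g h by (rule subgroup.m_closed)
  ultimately show ?thesis
    using D_eq by blast
qed

lemma generate_iso_sym_group_3_not_commute:
  assumes e: "bij e" and f: "bij f"
    and iso: "BijGroup UNIV\<lparr>carrier := generate (BijGroup UNIV) {e, f}\<rparr> \<cong> sym_group 3"
  shows "e \<circ> f \<noteq> f \<circ> e"
proof
  assume ef: "e \<circ> f = f \<circ> e"
  interpret group "BijGroup UNIV" by (rule group_BijGroup)
  have ef_carrier: "{e, f} \<subseteq> carrier (BijGroup UNIV)"
    using e f by simp
  have ef_commute: "s \<otimes>\<^bsub>BijGroup UNIV\<^esub> t = t \<otimes>\<^bsub>BijGroup UNIV\<^esub> s" if "s \<in> {e, f}" "t \<in> {e, f}" for s t
    using that ef_carrier ef by auto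
  have "x \<otimes>\<^bsub>BijGroup UNIV\<^esub> y = y \<otimes>\<^bsub>BijGroup UNIV\<^esub> x"
    if "x \<in> generate (BijGroup UNIV) {e, f}" "y \<in> generate (BijGroup UNIV) {e, f}" for x y
    by (rule generate_commute[OF ef_carrier ef_commute that])
  then show False
    using iso_sym_group_3_not_commute[OF iso] by blast
qed

lemma symplectic_3transp_BijGroupI:
  fixes D :: "('a \<Rightarrow> 'a) set"
  assumes invol: "\<And>d. d \<in> D \<Longrightarrow> d \<circ> d = id"
    and nontriv: "id \<notin> D"
    and three: "\<forall>d\<in>D. \<forall>e\<in>D. (d \<circ> e) ^^ 2 = id \<or> (d \<circ> e) ^^ 3 = id"
    and cc: "conj_class (BijGroup UNIV) (generate (BijGroup UNIV) D) D"
    and sympl: "\<And>d e f. d \<in> D \<Longrightarrow> e \<in> D \<Longrightarrow> f \<in> D \<Longrightarrow> e \<circ> f \<noteq> f \<circ> e \<Longrightarrow>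
                  d \<circ> e = e \<circ> d \<or> d \<circ> f = f \<circ> d \<or> d \<circ> (e \<circ> f \<circ> e) = (e \<circ> f \<circ> e) \<circ> d"
  shows "symplectic_3transp (BijGroup UNIV) (generate (BijGroup UNIV) D) D"
proof -
  let ?G = "BijGroup (UNIV :: 'a set)"
  interpret group ?G by (rule group_BijGroup)
  have bij: "bij d" if "d \<in> D" for d
    using o_bij[of d d] invol[OF that] by simp
  then have D_carrier: "D \<subseteq> carrier ?G" by auto
  show ?thesis
    unfolding symplectic_3transp_def
  proof (intro conjI ballI impI)
    show "D \<subseteq> generate ?G D" by (blast intro: generate.incl)
    show "\<And>d. d \<in> D \<Longrightarrow> d \<noteq> \<one>\<^bsub>?G\<^esub>"
      using nontriv by auto
    show "\<And>d. d \<in> D \<Longrightarrow> d \<otimes>\<^bsub>?G\<^esub> d = \<one>\<^bsub>?G\<^esub>"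
      using invol bij by simp
    show "\<And>g d. g \<in> generate ?G D \<Longrightarrow> d \<in> D \<Longrightarrow> g \<otimes>\<^bsub>?G\<^esub> d \<otimes>\<^bsub>?G\<^esub> inv\<^bsub>?G\<^esub> g \<in> D"
      using conj_class_conj_closed[OF generate_is_subgroup[OF D_carrier] cc D_carrier] .
  next
    fix d e assume "d \<in> D" "e \<in> D"
    then show "(d \<otimes>\<^bsub>?G\<^esub> e) [^]\<^bsub>?G\<^esub> (2::nat) = \<one>\<^bsub>?G\<^esub> \<or> (d \<otimes>\<^bsub>?G\<^esub> e) [^]\<^bsub>?G\<^esub> (3::nat) = \<one>\<^bsub>?G\<^esub>"
      using three bij bij_comp[of e d] by simp
  next
    fix d e f assume d: "d \<in> D" and e: "e \<in> D" and f: "f \<in> D"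
      and "?G\<lparr>carrier := generate ?G {e, f}\<rparr> \<cong> sym_group 3"
    then have "d \<circ> e = e \<circ> d \<or> d \<circ> f = f \<circ> d \<or> d \<circ> (e \<circ> f \<circ> e) = (e \<circ> f \<circ> e) \<circ> d"
      using sympl generate_iso_sym_group_3_not_commute bij by blast
    moreover have "bij d" "bij e" "bij f" "bij (e \<circ> f)" "bij (e \<circ> f \<circ> e)"
      using d e f bij by (auto intro: bij_comp)
    ultimately show "d \<otimes>\<^bsub>?G\<^esub> e = e \<otimes>\<^bsub>?G\<^esub> d \<or> d \<otimes>\<^bsub>?G\<^esub> f = f \<otimes>\<^bsub>?G\<^esub> d \<or>
        d \<otimes>\<^bsub>?G\<^esub> (e \<otimes>\<^bsub>?G\<^esub> f \<otimes>\<^bsub>?G\<^esub> e) = e \<otimes>\<^bsub>?G\<^esub> f \<otimes>\<^bsub>?G\<^esub> e \<otimes>\<^bsub>?G\<^esub> d"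
      by (simp only: mult_BijGroup_UNIV)
  qed simp
qed

lemma involutions_commute_of_order_2:
  assumes s: "s \<circ> s = id" and t: "t \<circ> t = id" and st: "(s \<circ> t) ^^ 2 = id"
  shows "s \<circ> t = t \<circ> s"
proof
  fix x
  have "s (s y) = y" "t (t y) = y" "s (t (s (t y))) = y" for y
    using s t st by (simp_all add: fun_eq_iff numeral_eq_Suc)
  then show "(s \<circ> t) x = (t \<circ> s) x"
    by (metis comp_apply)
qed

lemma involutions_braid_of_order_3:
  assumes s: "s \<circ> s = id" and t: "t \<circ> t = id" and st: "(s \<circ> t) ^^ 3 = id"
  shows "s \<circ> t \<circ> s = t \<circ> s \<circ> t"
proof
  fix x
  have ss: "s (s y) = y" and tt: "t (t y) = y" and sts: "s (t (s (t (s (t y))))) = y" for y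
    using s t st by (simp_all add: fun_eq_iff numeral_eq_Suc)
  show "(s \<circ> t \<circ> s) x = (t \<circ> s \<circ> t) x"
    using sts[of "t (s (t x))"] by (simp add: ss tt)
qed

lemma involution_conj_eq_id:
  assumes s: "s \<circ> s = id" and sts: "s \<circ> t \<circ> s = id"
  shows "t = id"
proof -
  have "t = (s \<circ> s) \<circ> t \<circ> (s \<circ> s)"
    using s by simp
  also have "\<dots> = s \<circ> (s \<circ> t \<circ> s) \<circ> s"
    by (simp add: comp_assoc)
  also have "\<dots> = id"
    using s sts by simp
  finally show ?thesis .
qed

lemma square_ne_quarter_combination:
  fixes a b c :: "'a::field"
  assumes "(3::'a) \<noteq> 0" "4 * a^2 = 1" "4 * b^2 = 1" "4 * c^2 = 1"
  shows "4 * (2*c*a - b)^2 \<noteq> 1"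
proof
  assume h: "4 * (2*c*a - b)^2 = 1"
  have "4 * (2*c*a - b)^2 = (4*c^2) * (4*a^2) + 4*b^2 - 16*a*b*c"
    by (simp add: algebra_simps power2_eq_square)
  then have abc: "16*a*b*c = 1"
    using h assms(2-4) by simp
  have "(16*a*b*c)^2 = 4 * ((4*a^2) * (4*b^2) * (4*c^2))"
    by (simp add: algebra_simps power2_eq_square)
  then have "(4::'a) = 1"
    using abc assms(2-4) by simp
  moreover have "(3::'a) = 4 - 1"
    by simp
  ultimately show False
    using assms(1) by simp
qed

section \<open>Half-axes and Miyamoto involutions\<close>

locale left_additive_algebra = vector_space sc
  for sc :: "'f::field \<Rightarrow> 'v::ab_group_add \<Rightarrow> 'v" +
  fixes m :: "'v \<Rightarrow> 'v \<Rightarrow> 'v"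
  assumes mult_add_left: "m (x + y) z = m x z + m y z"
begin

lemma half_axis_decompose:
  assumes "half_axis sc m a"
  obtains x1 x0 xh where "x1 \<in> eig sc m a 1" "x0 \<in> eig sc m a 0" "xh \<in> eig sc m a (1/2)"
    "x = x1 + x0 + xh"
proof -
  have "\<forall>x. \<exists>x1 x0 xh. x1 \<in> eig sc m a 1 \<and> x0 \<in> eig sc m a 0 \<and> xh \<in> eig sc m a (1/2)
      \<and> x = x1 + x0 + xh"
    using assms unfolding half_axis_def by (elim conjE) assumption
  then show ?thesis
    using that by blast
qed

lemma half_axis_independent:
  assumes "half_axis sc m a" "x1 \<in> eig sc m a 1" "x0 \<in> eig sc m a 0" "xh \<in> eig sc m a (1/2)"
    "x1 + x0 + xh = 0"
  shows "x1 = 0 \<and> x0 = 0 \<and> xh = 0"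
proof -
  have "\<forall>x1 x0 xh. x1 \<in> eig sc m a 1 \<and> x0 \<in> eig sc m a 0 \<and> xh \<in> eig sc m a (1/2)
      \<and> x1 + x0 + xh = 0 \<longrightarrow> x1 = 0 \<and> x0 = 0 \<and> xh = 0"
    using assms(1) unfolding half_axis_def by (elim conjE) assumption
  then show ?thesis
    using assms(2-5) by blast
qed

lemma half_axis_idempotent: "half_axis sc m a \<Longrightarrow> m a a = a"
  unfolding half_axis_def by (elim conjE)

lemma mult_zero_left [simp]: "m 0 z = 0"
  using mult_add_left[of 0 0 z] by simp

lemma eig_diff:
  assumes "x \<in> eig sc m a l" "y \<in> eig sc m a l"
  shows "x - y \<in> eig sc m a l"
proof -
  have "m (x - y) a = m x a - m y a"
    using mult_add_left[of "x - y" y a] by (simp add: eq_diff_eq)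
  then show ?thesis
    using assms by (simp add: eig_def scale_right_diff_distrib)
qed

lemma tau_half_axis_eq:
  assumes a: "half_axis sc m a" and p: "p \<in> Aplus sc m a" and q: "q \<in> Aminus sc m a"
  shows "tau sc m a (p + q) = p - q"
  unfolding tau_def
proof (rule the_equality)
  show "\<exists>p' q'. p' \<in> Aplus sc m a \<and> q' \<in> Aminus sc m a \<and> p + q = p' + q' \<and> p - q = p' - q'"
    using p q by blast
next
  fix y assume "\<exists>p' q'. p' \<in> Aplus sc m a \<and> q' \<in> Aminus sc m a \<and> p + q = p' + q' \<and> y = p' - q'"
  then obtain p' q' where p': "p' \<in> Aplus sc m a" and q': "q' \<in> Aminus sc m a"
    and sum: "p + q = p' + q'" and y: "y = p' - q'"
    by blast
  obtain x1 x0 where x: "p = x1 + x0" "x1 \<in> eig sc m a 1" "x0 \<in> eig sc m a 0"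
    using p unfolding Aplus_def by blast
  obtain x1' x0' where x': "p' = x1' + x0'" "x1' \<in> eig sc m a 1" "x0' \<in> eig sc m a 0"
    using p' unfolding Aplus_def by blast
  have "x1 - x1' \<in> eig sc m a 1" "x0 - x0' \<in> eig sc m a 0" "q - q' \<in> eig sc m a (1/2)"
    using x x' q q' by (simp_all add: eig_diff Aminus_def)
  moreover have "(x1 - x1') + (x0 - x0') + (q - q') = 0"
    using sum x(1) x'(1) by (simp add: algebra_simps)
  ultimately have "x1 - x1' = 0 \<and> x0 - x0' = 0 \<and> q - q' = 0"
    by (rule half_axis_independent[OF a])
  then show "y = p - q"
    using x x' y by simp
qed

lemma tau_trivial:
  assumes a: "half_axis sc m a" and no_half: "eig sc m a (1/2) \<subseteq> {0}"
  shows "tau sc m a = id"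
proof
  fix x
  obtain x1 x0 xh where x: "x1 \<in> eig sc m a 1" "x0 \<in> eig sc m a 0" "xh \<in> eig sc m a (1/2)"
    "x = x1 + x0 + xh"
    using half_axis_decompose[OF a] .
  have "x1 + x0 \<in> Aplus sc m a"
    using x unfolding Aplus_def by blast
  moreover have "0 \<in> Aminus sc m a"
    by (simp add: Aminus_def eig_def)
  ultimately have "tau sc m a (x1 + x0 + 0) = x1 + x0 - 0"
    using a by (intro tau_half_axis_eq)
  moreover have "xh = 0"
    using x(3) no_half by blast
  ultimately show "tau sc m a x = id x"
    using x(4) by simp
qed

end

section \<open>Jordan algebras of Clifford type\<close>

locale clifford_algebra = left_additive_algebra sc m
  for sc :: "'f::field \<Rightarrow> 'v::ab_group_add \<Rightarrow> 'v" and m +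
  fixes e :: 'v and V :: "'v set" and B :: "'v \<Rightarrow> 'v \<Rightarrow> 'f"
  assumes subspace_V: "subspace V"
    and scale_e_in_V: "sc c e \<in> V \<Longrightarrow> c = 0"
    and decompose: "\<exists>c v. v \<in> V \<and> x = sc c e + v"
    and B_sym: "u \<in> V \<Longrightarrow> v \<in> V \<Longrightarrow> B u v = B v u"
    and B_add_left: "u \<in> V \<Longrightarrow> v \<in> V \<Longrightarrow> w \<in> V \<Longrightarrow> B (u + v) w = B u w + B v w"
    and B_scale_left: "u \<in> V \<Longrightarrow> v \<in> V \<Longrightarrow> B (sc c u) v = c * B u v"
    and mult_clifford: "u \<in> V \<Longrightarrow> v \<in> V \<Longrightarrow>
      m (sc \<alpha> e + u) (sc \<beta> e + v) = sc (\<alpha> * \<beta> + B u v) e + sc \<alpha> v + sc \<beta> u"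
    and two_nonzero: "(2::'f) \<noteq> 0"
begin

lemma V_closed [simp]:
  "0 \<in> V" "u \<in> V \<Longrightarrow> v \<in> V \<Longrightarrow> u + v \<in> V" "u \<in> V \<Longrightarrow> v \<in> V \<Longrightarrow> u - v \<in> V"
  "u \<in> V \<Longrightarrow> - u \<in> V" "u \<in> V \<Longrightarrow> sc c u \<in> V"
  using subspace_V by (simp_all add: subspace_0 subspace_add subspace_diff subspace_neg subspace_scale)

lemma B_diff_left: "u \<in> V \<Longrightarrow> v \<in> V \<Longrightarrow> w \<in> V \<Longrightarrow> B (u - v) w = B u w - B v w"
  using B_add_left[of "u - v" v w] by simp

lemma B_diff_right: "u \<in> V \<Longrightarrow> v \<in> V \<Longrightarrow> w \<in> V \<Longrightarrow> B w (u - v) = B w u - B w v"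
  using B_diff_left B_sym by simp

lemma B_scale_right: "u \<in> V \<Longrightarrow> v \<in> V \<Longrightarrow> B u (sc c v) = c * B u v"
  using B_scale_left B_sym by simp

lemma B_zero_left [simp]: "v \<in> V \<Longrightarrow> B 0 v = 0"
  using B_scale_left[of v v 0] by simp

lemma B_zero_right [simp]: "u \<in> V \<Longrightarrow> B u 0 = 0"
  using B_scale_right[of u u 0] by simp

lemma B_neg_left: "u \<in> V \<Longrightarrow> v \<in> V \<Longrightarrow> B (- u) v = - B u v"
  using B_scale_left[of u v "-1"] by simp

lemma B_neg_right: "u \<in> V \<Longrightarrow> v \<in> V \<Longrightarrow> B u (- v) = - B u v"
  using B_scale_right[of u v "-1"] by simp

lemma decompose_unique:
  assumes "u \<in> V" "w \<in> V" "sc a e + u = sc b e + w"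
  shows "a = b \<and> u = w"
proof -
  have "sc (a - b) e = w - u"
    using assms(3) by (simp add: scale_left_diff_distrib algebra_simps)
  then have "a - b = 0"
    using assms(1,2) scale_e_in_V by (metis V_closed(3))
  then show ?thesis
    using assms(3) by simp
qed

lemma fun_eq_decomposeI:
  assumes "\<And>\<beta> y. y \<in> V \<Longrightarrow> f (sc \<beta> e + y) = g (sc \<beta> e + y)"
  shows "f = g"
proof
  fix x
  obtain \<beta> y where "y \<in> V" "x = sc \<beta> e + y"
    using decompose by blast
  then show "f x = g x"
    using assms by simp
qed

definition reflect :: "'v \<Rightarrow> 'v \<Rightarrow> 'v" where
  "reflect P y = sc (2 * B y P) P - y"

lemma reflect_in_V [simp]: "P \<in> V \<Longrightarrow> y \<in> V \<Longrightarrow> reflect P y \<in> V"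
  by (simp add: reflect_def)

lemma B_reflect_left:
  "P \<in> V \<Longrightarrow> y \<in> V \<Longrightarrow> z \<in> V \<Longrightarrow> B (reflect P y) z = 2 * B y P * B P z - B y z"
  by (simp add: reflect_def B_diff_left B_scale_left)

lemma B_reflect_right:
  "P \<in> V \<Longrightarrow> y \<in> V \<Longrightarrow> z \<in> V \<Longrightarrow> B z (reflect P y) = 2 * B y P * B z P - B z y"
  by (simp add: reflect_def B_diff_right B_scale_right)

lemma reflect_self:
  assumes "B P P = 1"
  shows "reflect P P = P"
proof -
  have "sc 2 P = P + P"
    using scale_left_distrib[of 1 1 P] by simp
  then show ?thesis
    using assms by (simp add: reflect_def)
qed

lemma reflect_reflect:
  assumes "P \<in> V" "y \<in> V" "B P P = 1"
  shows "reflect P (reflect P y) = y"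
proof -
  have "B (reflect P y) P = B y P"
    using assms by (simp add: B_reflect_left)
  then show ?thesis
    by (simp add: reflect_def[of P "reflect P y"]) (simp add: reflect_def)
qed

lemma reflect_orthogonal_commute:
  assumes "P \<in> V" "Q \<in> V" "y \<in> V" "B P Q = 0"
  shows "reflect P (reflect Q y) = reflect Q (reflect P y)"
proof -
  have "B (reflect Q y) P = - B y P" "B (reflect P y) Q = - B y Q"
    using assms B_sym[of Q P] by (simp_all add: B_reflect_left)
  then have "reflect P (reflect Q y) = y - sc (2 * B y P) P - sc (2 * B y Q) Q"
    "reflect Q (reflect P y) = y - sc (2 * B y P) P - sc (2 * B y Q) Q"
    by (simp_all add: reflect_def)
  then show ?thesis
    by simp
qed

lemma reflect_neg: "P \<in> V \<Longrightarrow> y \<in> V \<Longrightarrow> reflect (- P) y = reflect P y"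
  by (simp add: reflect_def B_neg_right)

lemma reflect_self_adjoint:
  assumes "P \<in> V" "y \<in> V" "z \<in> V"
  shows "B (reflect P y) z = B y (reflect P z)"
proof -
  have "B y (reflect P z) = B (reflect P z) y"
    using assms by (simp add: B_sym)
  also have "\<dots> = 2 * B z P * B P y - B z y"
    using assms by (simp add: B_reflect_left)
  also have "\<dots> = B (reflect P y) z"
    using assms B_sym[of z P] B_sym[of P y] B_sym[of z y] by (simp add: B_reflect_left)
  finally show ?thesis ..
qed

lemma reflect_unit: "P \<in> V \<Longrightarrow> Q \<in> V \<Longrightarrow> B P P = 1 \<Longrightarrow> B (reflect P Q) (reflect P Q) = B Q Q"
  by (simp add: reflect_self_adjoint reflect_reflect)

lemma reflect_linear:
  assumes "P \<in> V" "w \<in> V" "x \<in> V"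
  shows "reflect P (sc c w - x) = sc c (reflect P w) - reflect P x"
proof -
  have "B (sc c w - x) P = c * B w P - B x P"
    using assms by (simp add: B_diff_left B_scale_left)
  then have "reflect P (sc c w - x) = sc (2 * (c * B w P - B x P)) P - (sc c w - x)"
    by (simp only: reflect_def)
  also have "\<dots> = sc c (reflect P w) - reflect P x"
    by (simp add: reflect_def right_diff_distrib scale_left_diff_distrib scale_right_diff_distrib)
  finally show ?thesis .
qed

lemma reflect_scale: "P \<in> V \<Longrightarrow> w \<in> V \<Longrightarrow> reflect P (sc c w) = sc c (reflect P w)"
  using reflect_linear[of P w 0 c] by (simp add: reflect_def)

lemma reflect_conj:
  assumes "P \<in> V" "Q \<in> V" "y \<in> V" "B P P = 1"
  shows "reflect P (reflect Q (reflect P y)) = reflect (reflect P Q) y"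
proof -
  have "reflect P (reflect Q (reflect P y)) = reflect P (sc (2 * B (reflect P y) Q) Q - reflect P y)"
    by (simp add: reflect_def[of Q])
  also have "\<dots> = sc (2 * B (reflect P y) Q) (reflect P Q) - reflect P (reflect P y)"
    using assms by (simp add: reflect_linear)
  also have "\<dots> = sc (2 * B y (reflect P Q)) (reflect P Q) - y"
    using assms by (simp add: reflect_reflect reflect_self_adjoint)
  finally show ?thesis
    by (simp add: reflect_def)
qed

lemma unit_multiple:
  assumes "Q \<in> V" "B P P = 1" "B Q Q = 1" "P = sc c Q"
  shows "P = Q \<or> P = - Q"
proof -
  have "c * c = 1"
    using assms by (simp add: B_scale_left B_scale_right)
  then have "(c - 1) * (c + 1) = 0"
    by (simp add: algebra_simps)
  then have "c = 1 \<or> c = -1"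
    by (simp add: eq_neg_iff_add_eq_0)
  then show ?thesis
    using assms(4) by auto
qed

lemma reflect_eq_cases:
  assumes P: "P \<in> V" "B P P = 1" and Q: "Q \<in> V" "B Q Q = 1"
    and eq: "\<forall>y\<in>V. reflect P y = reflect Q y"
  shows "P = Q \<or> P = - Q"
proof -
  have "P = reflect Q P"
    using eq P reflect_self[of P] by simp
  then have "sc 2 P = sc 2 (sc (B P Q) Q)"
    using scale_left_distrib[of 1 1 P] by (simp add: reflect_def eq_diff_eq)
  then have "P = sc (B P Q) Q"
    using two_nonzero scale_cancel_left by blast
  then show ?thesis
    using unit_multiple P Q by blast
qed

lemma reflect_braid_cases:
  assumes P: "P \<in> V" "B P P = 1" and Q: "Q \<in> V" "B Q Q = 1"
    and braid: "\<forall>y\<in>V. reflect (reflect P Q) y = reflect (reflect Q P) y"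
  shows "4 * (B P Q)^2 = 1 \<or> P = Q \<or> P = - Q"
proof -
  define c where "c = B P Q"
  have PQ: "reflect P Q = sc (2 * c) P - Q" and QP: "reflect Q P = sc (2 * c) Q - P"
    using P Q B_sym[of P Q] by (simp_all add: reflect_def c_def)
  have "reflect P Q = reflect Q P \<or> reflect P Q = - reflect Q P"
    using P Q braid by (intro reflect_eq_cases) (simp_all add: reflect_unit)
  then show ?thesis
  proof
    assume "reflect P Q = reflect Q P"
    moreover have "sc (2 * c + 1) (P - Q) = reflect P Q - reflect Q P"
      unfolding PQ QP by (simp add: algebra_simps scale_right_diff_distrib)
    ultimately have "2 * c + 1 = 0 \<or> P = Q"
      by simp
    moreover have "4 * c^2 = (2 * c + 1) * (2 * c - 1) + 1"
      by (simp add: power2_eq_square algebra_simps)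
    ultimately show ?thesis
      unfolding c_def by auto
  next
    assume "reflect P Q = - reflect Q P"
    moreover have "sc (2 * c - 1) (P + Q) = reflect P Q + reflect Q P"
      unfolding PQ QP by (simp add: algebra_simps scale_left_diff_distrib)
    ultimately have "2 * c - 1 = 0 \<or> P = - Q"
      by (simp add: eq_neg_iff_add_eq_0)
    moreover have "4 * c^2 = (2 * c - 1) * (2 * c + 1) + 1"
      by (simp add: power2_eq_square algebra_simps)
    ultimately show ?thesis
      unfolding c_def by auto
  qed
qed

definition axis :: "'v \<Rightarrow> 'v" where
  "axis P = sc (1/2) e + sc (1/2) P"

lemma mult_axis:
  assumes "y \<in> V" "P \<in> V"
  shows "m (sc \<beta> e + y) (axis P) = sc ((\<beta> + B y P) / 2) e + sc (\<beta> / 2) P + sc (1/2) y"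
  using assms mult_clifford[of y "sc (1/2) P" \<beta> "1/2"]
  by (simp add: axis_def B_scale_right add_divide_distrib)

lemma axis_eig_one:
  assumes "P \<in> V" "B P P = 1"
  shows "sc \<gamma> e + sc \<gamma> P \<in> eig sc m (axis P) 1"
proof -
  have "(\<gamma> + \<gamma>) / 2 = \<gamma>" "sc (\<gamma> / 2) P + sc (1/2) (sc \<gamma> P) = sc \<gamma> P"
    using two_nonzero by (simp_all add: field_simps flip: scale_left_distrib)
  then show ?thesis
    using assms by (simp add: eig_def mult_axis B_scale_left add.assoc)
qed

lemma axis_eig_zero:
  assumes "P \<in> V" "B P P = 1"
  shows "sc \<delta> e + sc (- \<delta>) P \<in> eig sc m (axis P) 0"
  using assms mult_axis[of "sc (- \<delta>) P" P \<delta>] by (simp add: eig_def B_neg_left B_scale_left)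

lemma axis_eig_half:
  assumes "q \<in> V" "P \<in> V" "B q P = 0"
  shows "q \<in> eig sc m (axis P) (1/2)"
  using assms mult_axis[of q P 0] by (simp add: eig_def)

lemma tau_axis_apply:
  assumes P: "P \<in> V" "B P P = 1" "half_axis sc m (axis P)" and y: "y \<in> V"
  shows "tau sc m (axis P) (sc \<beta> e + y) = sc \<beta> e + reflect P y"
proof -
  define k where "k = B y P"
  define x1 where "x1 = sc ((\<beta> + k) / 2) e + sc ((\<beta> + k) / 2) P"
  define x0 where "x0 = sc ((\<beta> - k) / 2) e + sc (- ((\<beta> - k) / 2)) P"
  define q where "q = y - sc k P"
  have "x1 + x0 \<in> Aplus sc m (axis P)"
    unfolding Aplus_def x1_def x0_def using P axis_eig_one axis_eig_zero by blast
  moreover have "q \<in> Aminus sc m (axis P)"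
    unfolding Aminus_def q_def using P y by (intro axis_eig_half) (simp_all add: B_diff_left B_scale_left k_def)
  ultimately have tau_eq: "tau sc m (axis P) (x1 + x0 + q) = x1 + x0 - q"
    using P(3) by (rule tau_half_axis_eq[rotated])
  have x10: "x1 + x0 = sc \<beta> e + sc k P"
  proof -
    have "(\<beta> + k) / 2 + (\<beta> - k) / 2 = \<beta>" "(\<beta> + k) / 2 - (\<beta> - k) / 2 = k"
      using two_nonzero by (simp_all add: add_divide_distrib[symmetric] diff_divide_distrib[symmetric]
          flip: mult_2)
    moreover have "x1 + x0 = sc ((\<beta> + k) / 2 + (\<beta> - k) / 2) e + sc ((\<beta> + k) / 2 - (\<beta> - k) / 2) P"
      unfolding x1_def x0_def scale_left_distrib scale_left_diff_distrib by (simp add: algebra_simps)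
    ultimately show ?thesis
      by (simp only:)
  qed
  have "reflect P y = sc k P + sc k P - y"
    unfolding reflect_def k_def[symmetric] by (metis mult_2 scale_left_distrib)
  then have "x1 + x0 - q = sc \<beta> e + reflect P y"
    unfolding x10 q_def by (simp add: algebra_simps)
  moreover have "x1 + x0 + q = sc \<beta> e + y"
    unfolding x10 q_def by simp
  ultimately show ?thesis
    using tau_eq by (simp only:)
qed

lemma eig_half_scalar_trivial:
  assumes "\<alpha> \<noteq> 1/2"
  shows "eig sc m (sc \<alpha> e) (1/2) \<subseteq> {0}"
proof
  fix x assume x: "x \<in> eig sc m (sc \<alpha> e) (1/2)"
  obtain \<beta> z where z: "z \<in> V" and xz: "x = sc \<beta> e + z"
    using decompose by blast
  have "m x (sc \<alpha> e) = sc (\<beta> * \<alpha>) e + sc \<alpha> z"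
    unfolding xz using z mult_clifford[of z 0 \<beta> \<alpha>] by simp
  moreover have "m x (sc \<alpha> e) = sc (\<beta> * (1/2)) e + sc (1/2) z"
    using x by (simp add: eig_def xz scale_right_distrib)
  ultimately have "sc (\<beta> * \<alpha>) e + sc \<alpha> z = sc (\<beta> * (1/2)) e + sc (1/2) z"
    by metis
  then have "\<beta> * \<alpha> = \<beta> * (1/2) \<and> sc \<alpha> z = sc (1/2) z"
    by (rule decompose_unique[rotated 2]) (simp_all add: z)
  then have "\<beta> = 0" "z = 0"
    using assms by (metis mult_cancel_left, metis scale_cancel_right)
  then show "x \<in> {0}"
    using xz by simp
qed

lemma idempotent_cases:
  assumes idem: "m a a = a"
  obtains (scalar) \<alpha> where "a = sc \<alpha> e" "\<alpha> \<noteq> 1/2"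
    | (axis) P where "P \<in> V" "B P P = 1" "a = axis P"
proof -
  obtain \<alpha> y where y: "y \<in> V" and a: "a = sc \<alpha> e + y"
    using decompose by blast
  have "sc (\<alpha> * \<alpha> + B y y) e + (sc \<alpha> y + sc \<alpha> y) = sc \<alpha> e + y"
    using idem y mult_clifford[of y y \<alpha> \<alpha>] by (simp add: a add.assoc)
  then have coeffs: "\<alpha> * \<alpha> + B y y = \<alpha>" "sc \<alpha> y + sc \<alpha> y = y"
    using decompose_unique[of "sc \<alpha> y + sc \<alpha> y" y] y by auto
  show ?thesis
  proof (cases "y = 0")
    case True
    have "\<alpha> * \<alpha> = \<alpha> * 1"
      using coeffs(1) True by simp
    then have "\<alpha> = 0 \<or> \<alpha> = 1"
      by (metis mult_cancel_left)
    moreover have "(2::'f) \<noteq> 1"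
      by (metis add_cancel_right_right one_add_one zero_neq_one)
    ultimately have "\<alpha> \<noteq> 1/2"
      using two_nonzero by (auto simp: field_simps)
    then show ?thesis
      using a True by (intro scalar[of \<alpha>]) simp_all
  next
    case False
    have "sc (\<alpha> + \<alpha>) y = sc 1 y"
      by (metis coeffs(2) scale_left_distrib scale_one)
    then have "\<alpha> + \<alpha> = 1"
      using False scale_cancel_right by blast
    then have \<alpha>: "\<alpha> = 1/2"
      using two_nonzero by (simp add: field_simps flip: mult_2)
    have "B (sc 2 y) (sc 2 y) = 4 * B y y"
      using y by (simp add: B_scale_left B_scale_right)
    also have "\<dots> = 2 * (\<alpha> + \<alpha>) - (\<alpha> + \<alpha>) * (\<alpha> + \<alpha>)"
    proof -
      have "B y y = \<alpha> - \<alpha> * \<alpha>"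
        using coeffs(1) by (simp add: eq_diff_eq add.commute)
      then show ?thesis
        unfolding \<open>B y y = \<alpha> - \<alpha> * \<alpha>\<close> by (simp add: algebra_simps)
    qed
    also have "\<dots> = 1"
      using \<open>\<alpha> + \<alpha> = 1\<close> by simp
    finally have "B (sc 2 y) (sc 2 y) = 1" .
    moreover have "a = axis (sc 2 y)"
      using two_nonzero by (simp add: a \<alpha> axis_def)
    ultimately show ?thesis
      using y by (intro axis[of "sc 2 y"]) simp_all
  qed
qed

lemma nontrivial_axis_form:
  assumes a: "half_axis sc m a" and nontrivial: "tau sc m a \<noteq> id"
  obtains P where "P \<in> V" "B P P = 1" "a = axis P"
  using half_axis_idempotent[OF a]
proof (cases rule: idempotent_cases)
  case (scalar \<alpha>)
  then have "tau sc m a = id"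
    using a eig_half_scalar_trivial by (intro tau_trivial) auto
  with nontrivial show ?thesis ..
qed

end

section \<open>Closed sets of axes in a Jordan algebra of Clifford type\<close>

lemma clifford_type_clifford_algebra:
  fixes sc :: "'f::field \<Rightarrow> 'v::ab_group_add \<Rightarrow> 'v"
  assumes "comm_algebra sc m" "(2::'f) \<noteq> 0" "clifford_type sc m"
  shows "\<exists>e V B. clifford_algebra sc m e V B"
  using assms(3) unfolding clifford_type_def
  apply (elim exE conjE)
  subgoal for e V B
    using assms(1,2) unfolding comm_algebra_def
    by (intro exI[of _ e] exI[of _ V] exI[of _ B] clifford_algebra.intro left_additive_algebra.intro
        clifford_algebra_axioms.intro left_additive_algebra_axioms.intro) auto
  done

locale clifford_axes = clifford_algebra sc m e V B
  for sc :: "'f::field \<Rightarrow> 'v::ab_group_add \<Rightarrow> 'v" and m e V B +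
  fixes Ax :: "'v set"
  assumes axes_half_axis: "a \<in> Ax \<Longrightarrow> half_axis sc m a"
    and axes_closed: "a \<in> Ax \<Longrightarrow> b \<in> Ax \<Longrightarrow> tau sc m b a \<in> Ax"
    and three_transpositions: "\<forall>d\<in>miyamoto_set sc m Ax. \<forall>d'\<in>miyamoto_set sc m Ax.
      (d \<circ> d') ^^ 2 = id \<or> (d \<circ> d') ^^ 3 = id"
    and three_nonzero: "(3::'f) \<noteq> 0"
begin

definition unit_axes :: "'v set" where
  "unit_axes = {P \<in> V. B P P = 1 \<and> axis P \<in> Ax}"

abbreviation tau_axis :: "'v \<Rightarrow> 'v \<Rightarrow> 'v" where
  "tau_axis P \<equiv> tau sc m (axis P)"

lemma unit_axesD:
  assumes "P \<in> unit_axes"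
  shows "P \<in> V" "B P P = 1" "half_axis sc m (axis P)"
  using assms axes_half_axis by (auto simp: unit_axes_def)

lemma tau_unit_axis_apply:
  "P \<in> unit_axes \<Longrightarrow> y \<in> V \<Longrightarrow> tau_axis P (sc \<beta> e + y) = sc \<beta> e + reflect P y"
  using tau_axis_apply unit_axesD by blast

lemma tau_axis_restrict: "P \<in> unit_axes \<Longrightarrow> y \<in> V \<Longrightarrow> tau_axis P y = reflect P y"
  using tau_unit_axis_apply[of P y 0] by simp

lemma tau_axis_involution: "P \<in> unit_axes \<Longrightarrow> tau_axis P \<circ> tau_axis P = id"
  by (rule fun_eq_decomposeI) (simp add: tau_unit_axis_apply reflect_reflect unit_axesD)

lemma tau_axis_commute:
  assumes P: "P \<in> unit_axes" and Q: "Q \<in> unit_axes" and PQ: "B P Q = 0 \<or> P = Q \<or> P = - Q"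
  shows "tau_axis P \<circ> tau_axis Q = tau_axis Q \<circ> tau_axis P"
proof (rule fun_eq_decomposeI)
  fix \<beta> y assume y: "y \<in> V"
  have "reflect P (reflect Q y) = reflect Q (reflect P y)"
    using PQ
  proof (elim disjE)
    assume "B P Q = 0"
    then show ?thesis
      using reflect_orthogonal_commute unit_axesD(1)[OF P] unit_axesD(1)[OF Q] y by blast
  next
    assume "P = - Q"
    then show ?thesis
      using unit_axesD[OF Q] y by (simp add: reflect_neg)
  qed simp
  then show "(tau_axis P \<circ> tau_axis Q) (sc \<beta> e + y) = (tau_axis Q \<circ> tau_axis P) (sc \<beta> e + y)"
    using P Q y by (simp add: tau_unit_axis_apply unit_axesD)
qed

lemma reflect_unit_axes:
  assumes P: "P \<in> unit_axes" and Q: "Q \<in> unit_axes"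
  shows "reflect P Q \<in> unit_axes"
proof -
  have "tau_axis P (axis Q) = axis (reflect P Q)"
    using P Q tau_unit_axis_apply[of P "sc (1/2) Q" "1/2"] by (simp add: axis_def reflect_scale unit_axesD)
  moreover have "tau_axis P (axis Q) \<in> Ax"
    using P Q by (simp add: axes_closed unit_axes_def)
  ultimately show ?thesis
    using P Q by (simp add: unit_axes_def reflect_unit)
qed

lemma tau_axis_conj:
  assumes P: "P \<in> unit_axes" and Q: "Q \<in> unit_axes"
  shows "tau_axis P \<circ> tau_axis Q \<circ> tau_axis P = tau_axis (reflect P Q)"
  using P Q reflect_unit_axes[OF P Q]
  by (intro fun_eq_decomposeI) (simp add: tau_unit_axis_apply reflect_conj unit_axesD)

lemma miyamoto_set_eq:
  "miyamoto_set sc m Ax = {tau_axis P | P. P \<in> unit_axes \<and> tau_axis P \<noteq> id}"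
proof -
  have "\<exists>P. P \<in> unit_axes \<and> a = axis P" if a: "a \<in> Ax" and nontrivial: "tau sc m a \<noteq> id" for a
  proof -
    obtain P where "P \<in> V" "B P P = 1" "a = axis P"
      using nontrivial_axis_form[OF axes_half_axis[OF a] nontrivial] .
    then show ?thesis
      using a unfolding unit_axes_def by blast
  qed
  then show ?thesis
    unfolding miyamoto_set_def by (auto simp: unit_axes_def)
qed

lemma tau_axis_noncommuting:
  assumes P: "P \<in> unit_axes" "tau_axis P \<noteq> id" and Q: "Q \<in> unit_axes" "tau_axis Q \<noteq> id"
    and noncommuting: "tau_axis P \<circ> tau_axis Q \<noteq> tau_axis Q \<circ> tau_axis P"
  shows "4 * (B P Q)^2 = 1"
proof -
  have involutions: "tau_axis P \<circ> tau_axis P = id" "tau_axis Q \<circ> tau_axis Q = id"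
    using P Q by (simp_all add: tau_axis_involution)
  have "tau_axis P \<in> miyamoto_set sc m Ax" "tau_axis Q \<in> miyamoto_set sc m Ax"
    using P Q by (auto simp: miyamoto_set_eq)
  then have "(tau_axis P \<circ> tau_axis Q) ^^ 2 = id \<or> (tau_axis P \<circ> tau_axis Q) ^^ 3 = id"
    using three_transpositions by blast
  then have "tau_axis P \<circ> tau_axis Q \<circ> tau_axis P = tau_axis Q \<circ> tau_axis P \<circ> tau_axis Q"
    using involutions noncommuting involutions_commute_of_order_2 involutions_braid_of_order_3 by blast
  then have "tau_axis (reflect P Q) = tau_axis (reflect Q P)"
    using P Q by (simp add: tau_axis_conj)
  then have "\<forall>y\<in>V. reflect (reflect P Q) y = reflect (reflect Q P) y"
    using P Q by (metis reflect_unit_axes tau_axis_restrict)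
  then have "4 * (B P Q)^2 = 1 \<or> P = Q \<or> P = - Q"
    using unit_axesD[OF P(1)] unit_axesD[OF Q(1)] by (intro reflect_braid_cases)
  then show ?thesis
    using tau_axis_commute[OF P(1) Q(1)] noncommuting by blast
qed

lemma miyamoto_set_involution: "d \<in> miyamoto_set sc m Ax \<Longrightarrow> d \<circ> d = id"
  by (auto simp: miyamoto_set_eq tau_axis_involution)

lemma miyamoto_set_symplectic:
  assumes d: "d \<in> miyamoto_set sc m Ax" and s: "s \<in> miyamoto_set sc m Ax"
    and t: "t \<in> miyamoto_set sc m Ax" and st: "s \<circ> t \<noteq> t \<circ> s"
  shows "d \<circ> s = s \<circ> d \<or> d \<circ> t = t \<circ> d \<or> d \<circ> (s \<circ> t \<circ> s) = (s \<circ> t \<circ> s) \<circ> d"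
proof (rule ccontr)
  assume none: "\<not> ?thesis"
  obtain w where w: "w \<in> unit_axes" "tau_axis w \<noteq> id" "d = tau_axis w"
    using d by (auto simp: miyamoto_set_eq)
  obtain u where u: "u \<in> unit_axes" "tau_axis u \<noteq> id" "s = tau_axis u"
    using s by (auto simp: miyamoto_set_eq)
  obtain v where v: "v \<in> unit_axes" "tau_axis v \<noteq> id" "t = tau_axis v"
    using t by (auto simp: miyamoto_set_eq)
  define z where "z = reflect u v"
  have z: "z \<in> unit_axes" "tau_axis z = s \<circ> t \<circ> s"
    using u v by (simp_all add: z_def reflect_unit_axes tau_axis_conj)
  have "tau_axis z \<noteq> id"
    using z(2) v(2,3) involution_conj_eq_id[OF miyamoto_set_involution[OF s]] by auto
  have uv: "4 * (B u v)^2 = 1"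
    using tau_axis_noncommuting[OF u(1,2) v(1,2)] st u(3) v(3) by simp
  have wu: "4 * (B w u)^2 = 1"
    using tau_axis_noncommuting[OF w(1,2) u(1,2)] none w(3) u(3) by simp
  have wv: "4 * (B w v)^2 = 1"
    using tau_axis_noncommuting[OF w(1,2) v(1,2)] none w(3) v(3) by simp
  have wz: "4 * (B w z)^2 = 1"
    using tau_axis_noncommuting[OF w(1,2) z(1) \<open>tau_axis z \<noteq> id\<close>] none w(3) z(2) by simp
  have Bwz: "B w z = 2 * B u v * B w u - B w v"
    using u v w B_reflect_right[of u v w] B_sym[of v u] by (simp add: z_def unit_axesD)
  show False
    using square_ne_quarter_combination[OF three_nonzero wu wv uv] wz Bwz by simp
qed

end

theorem theorem7p10:
  fixes sc :: "'f::field \<Rightarrow> 'v::ab_group_add \<Rightarrow> 'v"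
    and m :: "'v \<Rightarrow> 'v \<Rightarrow> 'v"
    and Ax :: "'v set"
  assumes char2: "(2::'f) \<noteq> 0"
    and char3: "(3::'f) \<noteq> 0"
    and alg: "comm_algebra sc m"
    and axes: "\<forall>a\<in>Ax. half_axis sc m a"
    and gen: "alg_generates sc m Ax"
    and cliff: "clifford_type sc m"
    and closed: "\<forall>a\<in>Ax. \<forall>b\<in>Ax. tau sc m b a \<in> Ax"
    and three: "\<forall>d\<in>miyamoto_set sc m Ax. \<forall>e\<in>miyamoto_set sc m Ax.
                  (d \<circ> e) ^^ 2 = id \<or> (d \<circ> e) ^^ 3 = id"
    and cc: "conj_class (BijGroup (UNIV::'v set))
               (generate (BijGroup (UNIV::'v set)) (miyamoto_set sc m Ax)) (miyamoto_set sc m Ax)"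
  shows "symplectic_3transp (BijGroup (UNIV::'v set))
           (generate (BijGroup (UNIV::'v set)) (miyamoto_set sc m Ax)) (miyamoto_set sc m Ax)"
proof -
  obtain e V B where "clifford_algebra sc m e V B"
    using clifford_type_clifford_algebra[OF alg char2 cliff] by blast
  then interpret clifford_axes sc m e V B Ax
    using axes closed three char3 by (intro clifford_axes.intro clifford_axes_axioms.intro) auto
  show ?thesis
    using three cc miyamoto_set_involution miyamoto_set_symplectic
    by (intro symplectic_3transp_BijGroupI) (auto simp: miyamoto_set_def)
qed

end
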